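(* Let $p$ be a prime with $p\equiv 3 \pmod 4$. Then $$\sum_{k=0}^{p-1}\frac{\binom{2k}{k} f_k}{(-16)^k} \equiv 0 \pmod{p}.$$
   Context: The Franel numbers are defined by $f_n=\sum_{k=0}^n \binom{n}{k}^3$ for integers $n\ge 0$. The left-hand side is a rational number whose denominator is a power of $2$, hence coprime to $p$; a congruence modulo $p$ between such rationals means that the difference has numerator (in lowest terms) divisible by $p$ and denominator coprime to $p$. *)

theory Defs
  imports Complex_Main "HOL-Computational_Algebra.Primes"
begin

definition franel :: "nat \<Rightarrow> nat" where
  "franel n = (\<Sum>k=0..n. (n choose k) ^ 3)"

definition rat_cong :: "rat \<Rightarrow> rat \<Rightarrow> int \<Rightarrow> bool" where
  "rat_cong x y m = (let (a, b) = quotient_of (x - y) in m dvd a \<and> coprime b m)"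

end

theory Submission
  imports Defs "HOL-Number_Theory.Cong"
begin

(* Write p = 2n + 1 with n odd. Since -1/2 is congruent to n modulo p, the central binomial
  coefficient binom(2k, k) = (-4)^k binom(-1/2, k) is congruent to (-4)^k binom(n, k) for k < p.
  After clearing the denominator 16^(p-1), the sum therefore reduces to a multiple of
  A = sum_k binom(n, k) 4^(n-k) f_k. Strehl's identity f_k = sum_j binom(k, j)^2 binom(2j, k)
  rewrites A as sum_j binom(2j, j) binom(n, j) e_j, and the same congruence for binom(2j, j)
  turns it into an alternating sum sum_j (-1)^j s_j whose terms satisfy s_(n-j) = s_j;
  as n is odd, this sum vanishes. *)

lemma choose_mult_choose_diff_commute:
  assumes "i \<le> k" "j \<le> k"
  shows "(k choose j) * (j choose (k - i)) = (k choose i) * (i choose (k - j))"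
proof (cases "k - i \<le> j")
  case True
  have "(k choose j) * (j choose (k - i)) = (k choose (k - i)) * (i choose (j - (k - i)))"
    using choose_mult[OF True assms(2)] assms(1) by simp
  also have "\<dots> = (k choose i) * (i choose (k - j))"
    using binomial_symmetric[OF assms(1)] binomial_symmetric[of "j - (k - i)" i] True assms
    by (simp add: algebra_simps)
  finally show ?thesis .
next
  case False
  then show ?thesis using assms by (simp add: binomial_eq_0)
qed

lemma choose_sq_mult_choose_mult_choose:
  assumes "i \<le> j" "j \<le> k"
  shows "(k choose j)^2 * ((j choose i) * (j choose (k - i)))
       = (k choose i)^2 * (((k - i) choose (j - i)) * (i choose (k - j)))"
proof -
  have "(k choose j) * (j choose i) = (k choose i) * ((k - i) choose (j - i))"
    using choose_mult[OF assms] by simp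
  moreover have "(k choose j) * (j choose (k - i)) = (k choose i) * (i choose (k - j))"
    using choose_mult_choose_diff_commute assms by simp
  ultimately show ?thesis
    by (metis (no_types, lifting) mult.assoc mult.left_commute power2_eq_square)
qed

lemma sum_choose_shifted_vandermonde:
  assumes "i \<le> k"
  shows "(\<Sum>j=i..k. ((k - i) choose (j - i)) * (i choose (k - j))) = k choose i"
proof -
  have "(\<Sum>j=i..k. ((k - i) choose (j - i)) * (i choose (k - j)))
      = (\<Sum>t\<le>k - i. ((k - i) choose t) * (i choose (k - i - t)))"
    using sum.shift_bounds_cl_nat_ivl[of "\<lambda>j. ((k - i) choose (j - i)) * (i choose (k - j))" 0 i "k - i"] assms
    by (simp add: atLeast0AtMost algebra_simps)
  also have "\<dots> = k choose (k - i)"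
    using vandermonde[of "k - i" i "k - i"] assms by simp
  also have "\<dots> = k choose i"
    using binomial_symmetric[OF assms] by simp
  finally show ?thesis .
qed

lemma franel_eq_sum_choose_sq_mult_choose:
  "franel k = (\<Sum>j\<le>k. (k choose j)^2 * ((2 * j) choose k))"
proof -
  have "(\<Sum>j\<le>k. (k choose j)^2 * ((2 * j) choose k))
      = (\<Sum>j\<le>k. \<Sum>i\<le>k. (k choose j)^2 * ((j choose i) * (j choose (k - i))))"
    by (simp add: sum_distrib_left[symmetric] mult_2 vandermonde)
  also have "\<dots> = (\<Sum>i\<le>k. \<Sum>j\<le>k. (k choose j)^2 * ((j choose i) * (j choose (k - i))))"
    by (rule sum.swap)
  also have "\<dots> = (\<Sum>i\<le>k. (k choose i)^2 * (\<Sum>j=i..k. ((k - i) choose (j - i)) * (i choose (k - j))))"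
  proof (intro sum.cong refl)
    fix i assume "i \<in> {..k}"
    have "(\<Sum>j\<le>k. (k choose j)^2 * ((j choose i) * (j choose (k - i))))
        = (\<Sum>j=i..k. (k choose j)^2 * ((j choose i) * (j choose (k - i))))"
      by (intro sum.mono_neutral_right) (auto simp: binomial_eq_0)
    also have "\<dots> = (\<Sum>j=i..k. (k choose i)^2 * (((k - i) choose (j - i)) * (i choose (k - j))))"
      by (intro sum.cong refl) (simp add: choose_sq_mult_choose_mult_choose)
    finally show "(\<Sum>j\<le>k. (k choose j)^2 * ((j choose i) * (j choose (k - i))))
        = (k choose i)^2 * (\<Sum>j=i..k. ((k - i) choose (j - i)) * (i choose (k - j)))"
      by (simp add: sum_distrib_left)
  qed
  also have "\<dots> = (\<Sum>i\<le>k. (k choose i)^3)"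
    by (intro sum.cong refl) (simp add: sum_choose_shifted_vandermonde power2_eq_square power3_eq_cube)
  finally show ?thesis
    by (simp add: franel_def atLeast0AtMost)
qed

lemma choose_mult_choose_sq_mult_central_choose:
  assumes "i + j \<le> n"
  shows "(n choose (i + j)) * ((i + j) choose j)^2 * ((2 * j) choose (i + j))
       = ((2 * j) choose j) * (n choose j) * ((n - j) choose i) * (j choose i)"
proof -
  have "(n choose (i + j)) * ((i + j) choose j) = (n choose j) * ((n - j) choose i)"
    using choose_mult[of j "i + j" n] assms by simp
  moreover have "((i + j) choose j) * ((2 * j) choose (i + j)) = ((2 * j) choose j) * (j choose i)"
  proof (cases "i \<le> j")
    case True
    then show ?thesis using choose_mult[of j "i + j" "2 * j"] by (simp add: mult.commute)
  next
    case False
    then show ?thesis by (simp add: binomial_eq_0)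
  qed
  ultimately show ?thesis
    by (metis (no_types, lifting) mult.assoc mult.left_commute power2_eq_square)
qed

lemma sum_choose_mult_pow4_franel:
  "(\<Sum>k\<le>n. (n choose k) * 4^(n - k) * franel k)
   = (\<Sum>j\<le>n. ((2 * j) choose j) * (n choose j)
                * (\<Sum>i\<le>n - j. ((n - j) choose i) * (j choose i) * 4^(n - j - i)))"
proof -
  define g where "g k j = (n choose k) * 4^(n - k) * (k choose j)^2 * ((2 * j) choose k)" for k j
  have "(\<Sum>k\<le>n. (n choose k) * 4^(n - k) * franel k) = (\<Sum>k\<le>n. \<Sum>j\<le>k. g k j)"
    by (simp add: franel_eq_sum_choose_sq_mult_choose g_def sum_distrib_left mult_ac)
  also have "\<dots> = (\<Sum>k\<le>n. \<Sum>j\<le>n. g k j)"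
    by (intro sum.cong refl sum.mono_neutral_left) (auto simp: g_def binomial_eq_0)
  also have "\<dots> = (\<Sum>j\<le>n. \<Sum>k\<le>n. g k j)"
    by (rule sum.swap)
  also have "\<dots> = (\<Sum>j\<le>n. ((2 * j) choose j) * (n choose j)
                * (\<Sum>i\<le>n - j. ((n - j) choose i) * (j choose i) * 4^(n - j - i)))"
  proof (intro sum.cong refl)
    fix j assume j: "j \<in> {..n}"
    have "(\<Sum>k\<le>n. g k j) = (\<Sum>k=j..n. g k j)"
      by (intro sum.mono_neutral_right) (auto simp: g_def binomial_eq_0)
    also have "\<dots> = (\<Sum>i\<le>n - j. g (i + j) j)"
      using sum.shift_bounds_cl_nat_ivl[of "\<lambda>k. g k j" 0 j "n - j"] j by (simp add: atLeast0AtMost)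
    also have "\<dots> = (\<Sum>i\<le>n - j. ((2 * j) choose j) * (n choose j)
                      * (((n - j) choose i) * (j choose i) * 4^(n - j - i)))"
    proof (intro sum.cong refl)
      fix i assume "i \<in> {..n - j}"
      then have "i + j \<le> n" using j by simp
      have "g (i + j) j = (n choose (i + j)) * ((i + j) choose j)^2 * ((2 * j) choose (i + j))
          * 4^(n - j - i)"
        by (simp add: g_def ac_simps)
      also have "\<dots> = ((2 * j) choose j) * (n choose j) * (((n - j) choose i) * (j choose i) * 4^(n - j - i))"
        unfolding choose_mult_choose_sq_mult_central_choose[OF \<open>i + j \<le> n\<close>] by (simp only: mult.assoc)
      finally show "g (i + j) j
          = ((2 * j) choose j) * (n choose j) * (((n - j) choose i) * (j choose i) * 4^(n - j - i))" .
    qed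
    finally show "(\<Sum>k\<le>n. g k j) = ((2 * j) choose j) * (n choose j)
                * (\<Sum>i\<le>n - j. ((n - j) choose i) * (j choose i) * 4^(n - j - i))"
      by (simp add: sum_distrib_left)
  qed
  finally show ?thesis .
qed

lemma sum_alternating_eq_0_if_symmetric:
  fixes f :: "nat \<Rightarrow> 'a::{idom, ring_char_0}"
  assumes "odd n" and "\<And>j. j \<le> n \<Longrightarrow> f (n - j) = f j"
  shows "(\<Sum>j\<le>n. (-1)^j * f j) = 0"
proof -
  let ?S = "\<Sum>j\<le>n. (-1)^j * f j"
  have "?S = (\<Sum>j\<le>n. (-1)^(n - j) * f (n - j))"
    using sum.atLeastAtMost_rev[of "\<lambda>j. (-1)^j * f j" 0 n] by (simp add: atLeast0AtMost)
  also have "\<dots> = (\<Sum>j\<le>n. - ((-1)^j * f j))"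
    by (intro sum.cong refl) (use assms in \<open>auto simp: minus_one_power_iff\<close>)
  also have "\<dots> = - ?S"
    by (simp add: sum_negf)
  finally have "2 * ?S = 0"
    by simp
  then show ?thesis
    by simp
qed

lemma sum_alternating_choose_pow4_eq_0:
  assumes "odd n"
  shows "(\<Sum>j\<le>n. (-4)^j * int (n choose j) * int ((n choose j)
            * (\<Sum>i\<le>n - j. ((n - j) choose i) * (j choose i) * 4^(n - j - i)))) = 0"
proof -
  define s where "s j = (n choose j)^2 * (\<Sum>i\<le>n. ((n - j) choose i) * (j choose i) * 4^(n - i))" for j
  have "(-4)^j * int (n choose j) * int ((n choose j)
            * (\<Sum>i\<le>n - j. ((n - j) choose i) * (j choose i) * 4^(n - j - i)))
        = (-1)^j * int (s j)" if "j \<le> n" for j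
  proof -
    define e where "e = (\<Sum>i\<le>n - j. ((n - j) choose i) * (j choose i) * 4^(n - j - i))"
    have "4^j * e = (\<Sum>i\<le>n - j. ((n - j) choose i) * (j choose i) * (4::nat)^(n - i))"
      unfolding e_def sum_distrib_left
      by (intro sum.cong refl) (use that in \<open>auto simp flip: power_add\<close>)
    also have "\<dots> = (\<Sum>i\<le>n. ((n - j) choose i) * (j choose i) * 4^(n - i))"
      by (intro sum.mono_neutral_left) (auto simp: binomial_eq_0)
    finally have "s j = (n choose j)^2 * (4^j * e)"
      by (simp add: s_def)
    then have "int (s j) = int (n choose j) * int (n choose j) * (4^j * int e)"
      by (simp add: power2_eq_square)
    moreover have "(-4::int)^j = (-1)^j * 4^j"
      by (simp flip: power_mult_distrib)
    ultimately show ?thesis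
      unfolding e_def[symmetric] by (simp add: ac_simps)
  qed
  then have "(\<Sum>j\<le>n. (-4)^j * int (n choose j) * int ((n choose j)
            * (\<Sum>i\<le>n - j. ((n - j) choose i) * (j choose i) * 4^(n - j - i))))
        = (\<Sum>j\<le>n. (-1)^j * int (s j))"
    by simp
  also have "\<dots> = 0"
  proof (rule sum_alternating_eq_0_if_symmetric[OF assms])
    fix j assume "j \<le> n"
    then show "int (s (n - j)) = int (s j)"
      by (simp add: s_def binomial_symmetric[of j n, symmetric] mult.commute)
  qed
  finally show ?thesis .
qed

lemma Suc_times_central_binomial:
  "Suc k * ((2 * Suc k) choose Suc k) = 2 * (2 * k + 1) * ((2 * k) choose k)"
proof -
  have "Suc k * (Suc k * ((2 * Suc k) choose Suc k))
      = Suc k * (Suc (Suc (2 * k)) * (Suc (2 * k) choose Suc k))"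
    using Suc_times_binomial[of k "Suc (2 * k)"] binomial_symmetric[of k "Suc (2 * k)"]
    by (simp del: binomial_Suc_Suc)
  also have "\<dots> = Suc (Suc (2 * k)) * (Suc k * (Suc (2 * k) choose Suc k))"
    by (rule mult.left_commute)
  also have "\<dots> = Suc (Suc (2 * k)) * (Suc (2 * k) * ((2 * k) choose k))"
    by (simp only: Suc_times_binomial)
  also have "\<dots> = Suc k * (2 * (2 * k + 1) * ((2 * k) choose k))"
    by simp
  finally show ?thesis
    by (rule mult_left_cancel[OF Suc_not_Zero, THEN iffD1])
qed

lemma Suc_times_binomial_diff:
  "of_nat (Suc k) * of_nat (n choose Suc k) = (of_nat n - of_nat k) * (of_nat (n choose k) :: 'a::comm_ring_1)"
proof (cases "k \<le> n")
  case True
  have "Suc k * (n choose Suc k) = (n - k) * (n choose k)"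
    by (simp only: binomial_absorption binomial_absorb_comp)
  from arg_cong[where f="of_nat :: nat \<Rightarrow> 'a", OF this] show ?thesis
    by (simp only: of_nat_mult of_nat_diff[OF True])
next
  case False
  then show ?thesis
    by (simp add: binomial_eq_0)
qed

lemma central_binomial_cong:
  fixes p n k :: nat
  assumes "prime p" "p dvd 2 * n + 1" "k < p"
  shows "[int ((2 * k) choose k) = (-4)^k * int (n choose k)] (mod int p)"
  using assms(3)
proof (induction k)
  case 0
  show ?case by simp
next
  case (Suc k)
  let ?X = "(-4)^k * int (n choose k)"
  have "int (Suc k) * int ((2 * Suc k) choose Suc k) = int (Suc k * ((2 * Suc k) choose Suc k))"
    by (simp only: of_nat_mult)
  also have "\<dots> = 2 * (2 * int k + 1) * int ((2 * k) choose k)"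
    unfolding Suc_times_central_binomial by (simp add: algebra_simps)
  also have "[\<dots> = 2 * (2 * int k + 1) * ?X] (mod int p)"
    using Suc by (intro cong_scalar_left) simp
  also have "[2 * (2 * int k + 1) * ?X = -4 * (int n - int k) * ?X] (mod int p)"
  proof -
    have "2 * (2 * int k + 1) * ?X - -4 * (int n - int k) * ?X = 2 * int (2 * n + 1) * ?X"
      by (simp add: algebra_simps)
    moreover have "int p dvd 2 * int (2 * n + 1) * ?X"
      using assms(2) by (intro dvd_mult2 dvd_mult) (simp only: int_dvd_int_iff)
    ultimately show ?thesis
      by (simp only: cong_iff_dvd_diff)
  qed
  also have "-4 * (int n - int k) * ?X = int (Suc k) * ((-4)^Suc k * int (n choose Suc k))"
  proof -
    have "int (Suc k) * ((-4)^Suc k * int (n choose Suc k))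
        = -4 * (-4)^k * (int (Suc k) * int (n choose Suc k))"
      by (simp only: power_Suc ac_simps)
    also have "\<dots> = -4 * (-4)^k * ((int n - int k) * int (n choose k))"
      by (simp only: Suc_times_binomial_diff)
    also have "\<dots> = -4 * (int n - int k) * ?X"
      by (simp only: ac_simps)
    finally show ?thesis
      by (rule sym)
  qed
  finally have "[int (Suc k) * int ((2 * Suc k) choose Suc k)
              = int (Suc k) * ((-4)^Suc k * int (n choose Suc k))] (mod int p)" .
  moreover have "coprime (int (Suc k)) (int p)"
  proof -
    have "\<not> p dvd Suc k"
      using Suc.prems by (auto dest: dvd_imp_le)
    then have "coprime (Suc k) p"
      using assms(1) prime_imp_coprime coprime_commute by blast
    then show ?thesis
      by (simp only: coprime_int_iff)
  qed
  ultimately show ?case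
    by (simp only: cong_mult_lcancel)
qed

lemma sum_choose_pow4_franel_cong_0:
  assumes "prime p" "p = 2 * n + 1" "odd n"
  shows "[(\<Sum>k\<le>n. int ((n choose k) * 4^(n - k) * franel k)) = 0] (mod int p)"
proof -
  define e where "e j = (\<Sum>i\<le>n - j. ((n - j) choose i) * (j choose i) * 4^(n - j - i))" for j
  have "(\<Sum>k\<le>n. int ((n choose k) * 4^(n - k) * franel k))
      = (\<Sum>j\<le>n. int ((2 * j) choose j) * int ((n choose j) * e j))"
    unfolding of_nat_sum[symmetric] sum_choose_mult_pow4_franel e_def by (simp add: mult.assoc)
  also have "[\<dots> = (\<Sum>j\<le>n. (-4)^j * int (n choose j) * int ((n choose j) * e j))] (mod int p)"
  proof (intro cong_sum cong_scalar_right)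
    fix j assume "j \<in> {..n}"
    with assms show "[int ((2 * j) choose j) = (-4)^j * int (n choose j)] (mod int p)"
      by (intro central_binomial_cong) auto
  qed
  also have "(\<Sum>j\<le>n. (-4)^j * int (n choose j) * int ((n choose j) * e j)) = 0"
    unfolding e_def by (rule sum_alternating_choose_pow4_eq_0[OF assms(3)])
  finally show ?thesis .
qed

lemma sum_central_binomial_franel_cong:
  assumes "prime p" "p = 2 * n + 1"
  shows "[(\<Sum>k\<le>2 * n. (-1)^k * 16^(2 * n - k) * int ((2 * k) choose k) * int (franel k))
        = 4^(3 * n) * (\<Sum>k\<le>n. int ((n choose k) * 4^(n - k) * franel k))] (mod int p)"
proof -
  have "[(\<Sum>k\<le>2 * n. (-1)^k * 16^(2 * n - k) * int ((2 * k) choose k) * int (franel k))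
      = (\<Sum>k\<le>2 * n. (-1)^k * 16^(2 * n - k) * ((-4)^k * int (n choose k)) * int (franel k))] (mod int p)"
    using assms by (intro cong_sum cong_scalar_right cong_scalar_left central_binomial_cong) auto
  also have "(\<Sum>k\<le>2 * n. (-1)^k * 16^(2 * n - k) * ((-4)^k * int (n choose k)) * int (franel k))
      = (\<Sum>k\<le>n. (-1)^k * 16^(2 * n - k) * ((-4)^k * int (n choose k)) * int (franel k))"
    by (intro sum.mono_neutral_right) (auto simp: binomial_eq_0)
  also have "\<dots> = (\<Sum>k\<le>n. 4^(3 * n) * int ((n choose k) * 4^(n - k) * franel k))"
  proof (intro sum.cong refl)
    fix k assume "k \<in> {..n}"
    then have "k + 2 * (2 * n - k) = 3 * n + (n - k)"
      by simp
    have "(4::int)^k * 16^(2 * n - k) = 4^k * 4^(2 * (2 * n - k))"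
      by (simp add: power_mult)
    also have "\<dots> = 4^(3 * n) * 4^(n - k)"
      by (simp only: \<open>k + 2 * (2 * n - k) = 3 * n + (n - k)\<close> flip: power_add)
    finally have "(4::int)^k * 16^(2 * n - k) = 4^(3 * n) * 4^(n - k)" .
    moreover have "(-1::int)^k * (-4)^k = 4^k"
      by (simp flip: power_mult_distrib)
    ultimately have "(-1::int)^k * 16^(2 * n - k) * (-4)^k = 4^(3 * n) * 4^(n - k)"
      by (metis mult.commute mult.left_commute)
    then show "(-1)^k * 16^(2 * n - k) * ((-4)^k * int (n choose k)) * int (franel k)
        = 4^(3 * n) * int ((n choose k) * 4^(n - k) * franel k)"
      by (simp add: ac_simps)
  qed
  finally show ?thesis
    by (simp add: sum_distrib_left)
qed

lemma sum_divide_neg_power_mult_power: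
  fixes a :: "nat \<Rightarrow> 'a::field" and q :: 'a
  assumes "q \<noteq> 0"
  shows "(\<Sum>k\<le>N. a k / (-q)^k) * q^N = (\<Sum>k\<le>N. (-1)^k * q^(N - k) * a k)"
  unfolding sum_distrib_right
proof (intro sum.cong refl)
  fix k assume "k \<in> {..N}"
  then have "q^N = q^k * q^(N - k)"
    by (simp flip: power_add)
  moreover have "(-q)^k = (-1)^k * q^k" and "(-1::'a)^k * (-1)^k = 1"
    by (simp_all flip: power_mult_distrib)
  ultimately show "a k / (-q)^k * q^N = (-1)^k * q^(N - k) * a k"
    using assms by (simp add: field_simps)
qed

lemma rat_cong_0I:
  fixes x :: rat and D I m :: int
  assumes "x * of_int D = of_int I" "coprime D m" "m dvd I"
  shows "rat_cong x 0 m"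
proof -
  obtain a b where q: "quotient_of x = (a, b)"
    by (cases "quotient_of x")
  have "b > 0" "coprime a b" "x = of_int a / of_int b"
    using quotient_of_denom_pos[OF q] quotient_of_coprime[OF q] quotient_of_div[OF q] by simp_all
  with assms(1) have "a * D = I * b"
    by (simp add: field_simps flip: of_int_mult)
  then have "b dvd D"
    using \<open>coprime a b\<close> by (metis coprime_commute coprime_dvd_mult_right_iff dvd_triv_right)
  then have "coprime b m"
    using assms(2) coprime_imp_coprime dvd_trans by blast
  moreover have "m dvd a"
  proof -
    have "m dvd a * D"
      using \<open>a * D = I * b\<close> assms(3) by simp
    then show ?thesis
      using assms(2) by (simp add: coprime_commute coprime_dvd_mult_left_iff)
  qed
  ultimately show ?thesis
    by (simp add: rat_cong_def q)
qed

theorem theorem1p3: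
  fixes p :: nat
  assumes "prime p" and "p mod 4 = 3"
  shows "rat_cong (\<Sum>k=0..p-1. of_nat ((2*k) choose k) * of_nat (franel k) / (-16::rat) ^ k)
                  0 (int p)"
proof -
  define n where "n = 2 * (p div 4) + 1"
  have p: "p = 2 * n + 1" and "odd n"
    using assms(2) unfolding n_def by presburger+
  define I where "I = (\<Sum>k\<le>2 * n. (-1)^k * 16^(2 * n - k) * int ((2 * k) choose k) * int (franel k))"
  have "(\<Sum>k=0..p-1. of_nat ((2*k) choose k) * of_nat (franel k) / (-16::rat) ^ k) * of_int (16^(2 * n))
      = of_int I"
    using sum_divide_neg_power_mult_power[of "16::rat" "\<lambda>k. of_nat ((2*k) choose k) * of_nat (franel k)" "2 * n"]
    by (simp add: I_def p atLeast0AtMost ac_simps)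
  moreover have "coprime (16^(2 * n)) (int p)"
  proof -
    have "(16::int)^(2 * n) = 2^(8 * n)"
      by (simp add: power_mult)
    then show ?thesis
      by (simp add: p)
  qed
  moreover have "int p dvd I"
    unfolding cong_0_iff[symmetric]
    using cong_trans[OF sum_central_binomial_franel_cong[OF assms(1) p]
        cong_scalar_left[OF sum_choose_pow4_franel_cong_0[OF assms(1) p \<open>odd n\<close>]]]
    by (simp add: I_def)
  ultimately show ?thesis
    by (rule rat_cong_0I)
qed

end
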